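(* For an integer $d\ge 2$ and density matrices $\rho,\sigma$ on $\mathbb{C}^d$, let $$\mathcal{F}_C^{(d)}(\rho,\sigma)=\frac{1-r}{2}+\frac{1+r}{2}\left[\operatorname{tr}(\rho\sigma)+\sqrt{1-\operatorname{tr}(\rho^2)}\sqrt{1-\operatorname{tr}(\sigma^2)}\right],\qquad r=\frac{1}{d-1}.$$ Then for all integers $d_1,d_2\ge 2$, all density matrices $\rho_1,\sigma_1$ on $\mathbb{C}^{d_1}$ and $\rho_2,\sigma_2$ on $\mathbb{C}^{d_2}$, $$\mathcal{F}_C^{(d_1d_2)}(\rho_1\otimes\rho_2,\sigma_1\otimes\sigma_2)\ge\mathcal{F}_C^{(d_1)}(\rho_1,\sigma_1)\,\mathcal{F}_C^{(d_2)}(\rho_2,\sigma_2).$$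
   Context: A density matrix is a positive semidefinite matrix of unit trace. $\mathcal{F}_C$ is the fidelity of Chen et al., where $d$ is the dimension of the state space. *)

theory Defs
  imports "HOL-Analysis.Analysis"
begin

text \<open>Square complex matrices on C^d are modelled as complex^'n^'n with d = CARD('n).\<close>

definition quad_form :: "complex^'n^'n \<Rightarrow> complex^'n \<Rightarrow> complex" where
  "quad_form A x = (\<Sum>i\<in>UNIV. \<Sum>j\<in>UNIV. cnj (x$i) * A$i$j * x$j)"

definition psd :: "complex^'n^'n \<Rightarrow> bool" where
  "psd A \<longleftrightarrow> (\<forall>x. Im (quad_form A x) = 0 \<and> Re (quad_form A x) \<ge> 0)"

definition density_matrix :: "complex^'n^'n \<Rightarrow> bool" where
  "density_matrix A \<longleftrightarrow> psd A \<and> trace A = 1"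

definition kron :: "complex^'n^'n \<Rightarrow> complex^'m^'m \<Rightarrow> complex^('n \<times> 'm)^('n \<times> 'm)" where
  "kron A B = (\<chi> p q. A$(fst p)$(fst q) * B$(snd p)$(snd q))"

definition fidelity_C :: "complex^'n^'n \<Rightarrow> complex^'n^'n \<Rightarrow> real" where
  "fidelity_C \<rho> \<sigma> =
     (let r = 1 / (real CARD('n) - 1) in
      (1 - r) / 2 + (1 + r) / 2 *
        (Re (trace (\<rho> ** \<sigma>)) + sqrt (1 - Re (trace (\<rho> ** \<rho>))) * sqrt (1 - Re (trace (\<sigma> ** \<sigma>)))))"

end

theory Submission
  imports Defs
begin

(* Write G(rho, sigma) = tr(rho sigma) + sqrt(1 - tr rho^2) sqrt(1 - tr sigma^2) for the
   super-fidelity, so that F_C^(d) = (1 - r)/2 + (1 + r)/2 G is an increasing affine function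
   chen_affine d of G.  Super-fidelity is supermultiplicative under tensor products: given the
   Cauchy-Schwarz bound (tr rho sigma)^2 <= tr rho^2 tr sigma^2, this is a three-term
   Cauchy-Schwarz inequality, because 1 - p1 p2 = p1 (1 - p2) + (1 - p1) p2 + (1 - p1) (1 - p2).
   It remains to compare the affine maps: chen_affine d1 G1 * chen_affine d2 G2 is at most
   chen_affine (d1 d2) (G1 G2) as long as both factors lie in [0, 1], i.e. 2 - d <= d G <= d;
   the lower bound is Cauchy-Schwarz for the traceless parts of rho and sigma. *)

definition hermitian :: "complex^'n^'n \<Rightarrow> bool" where
  "hermitian A \<longleftrightarrow> (\<forall>i j. A$i$j = cnj (A$j$i))"

lemma hermitianD:
  "hermitian A \<Longrightarrow> A$i$j = cnj (A$j$i)"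
  unfolding hermitian_def by blast

lemma hermitian_cnj:
  "hermitian A \<Longrightarrow> cnj (A$i$j) = A$j$i"
  unfolding hermitian_def by metis

lemma quad_form_two_entries:
  fixes A :: "complex^'n^'n"
  shows "quad_form A (\<chi> k. (if k = i then \<alpha> else 0) + (if k = j then \<beta> else 0)) =
    cnj \<alpha> * A$i$i * \<alpha> + cnj \<alpha> * A$i$j * \<beta> + cnj \<beta> * A$j$i * \<alpha> + cnj \<beta> * A$j$j * \<beta>"
proof -
  have if_zero: "x * (if P then y else 0) = (if P then x * y else 0)"
    "(if P then y else 0) * x = (if P then y * x else 0)"
    "cnj (if P then y else 0) = (if P then cnj y else 0)" for P and x y :: complex
    by simp_all
  show ?thesis
    unfolding quad_form_def by (simp add: distrib_left distrib_right sum.distrib if_zero)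
qed

lemma psd_two_entries:
  fixes A :: "complex^'n^'n" and \<alpha> \<beta> :: complex and i j :: 'n
  assumes "psd A"
  defines "z \<equiv> cnj \<alpha> * A$i$i * \<alpha> + cnj \<alpha> * A$i$j * \<beta> + cnj \<beta> * A$j$i * \<alpha> + cnj \<beta> * A$j$j * \<beta>"
  shows "Im z = 0" and "0 \<le> Re z"
  using assms unfolding psd_def z_def quad_form_two_entries[symmetric] by auto

lemma psd_diag:
  fixes A :: "complex^'n^'n"
  assumes "psd A"
  shows "Im (A$i$i) = 0" and "0 \<le> Re (A$i$i)"
  using psd_two_entries[OF assms, of 1 i i 0] by auto

lemma psd_hermitian:
  assumes "psd A"
  shows "hermitian A"
  unfolding hermitian_def
proof (intro allI)
  fix i j
  have "Im (A$i$j + A$j$i) = 0"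
    using psd_two_entries(1)[OF assms, of 1 i j 1] psd_diag[OF assms] by simp
  moreover have "Re (A$i$j - A$j$i) = 0"
    using psd_two_entries(1)[OF assms, of 1 i j \<i>] psd_diag[OF assms] by simp
  ultimately show "A$i$j = cnj (A$j$i)"
    by (simp add: complex_eq_iff)
qed

lemma density_matrix_hermitian:
  "density_matrix A \<Longrightarrow> hermitian A"
  unfolding density_matrix_def by (simp add: psd_hermitian)

lemma nonneg_quadratic_discriminant:
  fixes a b c :: real
  assumes "0 \<le> a" "0 \<le> b" "0 \<le> c" and nonneg: "\<And>t. 0 \<le> a * t\<^sup>2 - 2 * c * t + b * c"
  shows "c \<le> a * b"
proof (cases "a = 0")
  case True
  with nonneg[of "b + 1"] assms show ?thesis
    by (simp add: algebra_simps) (smt (verit) mult_nonneg_nonneg)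
next
  case False
  with assms have "0 < a" by simp
  with nonneg[of "c / a"] have "0 \<le> c * (a * b - c)"
    by (simp add: field_simps power2_eq_square)
  with assms show ?thesis
    by (cases "c = 0") (auto simp: zero_le_mult_iff)
qed

lemma psd_offdiag_le:
  fixes A :: "complex^'n^'n"
  assumes "psd A"
  shows "(cmod (A$i$j))\<^sup>2 \<le> Re (A$i$i) * Re (A$j$j)"
proof -
  have herm: "A$i$j = cnj (A$j$i)"
    by (rule hermitianD[OF psd_hermitian[OF assms]])
  have diag: "Im (A$i$i) = 0" "Im (A$j$j) = 0" "0 \<le> Re (A$i$i)" "0 \<le> Re (A$j$j)"
    using psd_diag[OF assms] by auto
  define c where "c = (Re (A$j$i))\<^sup>2 + (Im (A$j$i))\<^sup>2"
  have "0 \<le> Re (A$i$i) * t\<^sup>2 - 2 * c * t + Re (A$j$j) * c" for t :: real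
    using psd_two_entries(2)[OF assms, of "of_real t" i j "- A$j$i"] diag
    unfolding herm c_def by (simp add: power2_eq_square algebra_simps)
  then have "c \<le> Re (A$i$i) * Re (A$j$j)"
    using nonneg_quadratic_discriminant[OF diag(3,4)] by (simp add: c_def)
  then show ?thesis
    unfolding c_def herm by (simp add: cmod_power2)
qed

lemma trace_matrix_mult:
  "trace (A ** B) = (\<Sum>i\<in>UNIV. \<Sum>k\<in>UNIV. A$i$k * B$k$i)"
  by (simp add: trace_def matrix_matrix_mult_def)

lemma Re_trace_mult_eq_inner:
  fixes A B :: "complex^'n^'n"
  assumes "hermitian B"
  shows "Re (trace (A ** B)) = inner A B"
proof -
  have "Re (trace (A ** B)) = (\<Sum>i\<in>UNIV. \<Sum>k\<in>UNIV. Re (A$i$k * cnj (B$i$k)))"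
    unfolding trace_matrix_mult Re_sum
    by (intro sum.cong refl) (simp only: hermitian_cnj[OF assms])
  also have "\<dots> = inner A B"
    by (simp add: inner_vec_def inner_complex_def)
  finally show ?thesis .
qed

lemma Im_trace_mult_hermitian:
  fixes A B :: "complex^'n^'n"
  assumes "hermitian A" "hermitian B"
  shows "Im (trace (A ** B)) = 0"
proof -
  have "cnj (trace (A ** B)) = (\<Sum>i\<in>UNIV. \<Sum>k\<in>UNIV. A$k$i * B$i$k)"
    unfolding trace_matrix_mult cnj_sum complex_cnj_mult
    by (intro sum.cong refl) (simp only: hermitian_cnj[OF assms(1)] hermitian_cnj[OF assms(2)])
  also have "\<dots> = trace (A ** B)"
    unfolding trace_matrix_mult by (rule sum.swap)
  finally show ?thesis
    by (simp add: complex_eq_iff)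
qed

lemma trace_kron_mult:
  fixes A C :: "complex^'n^'n" and B D :: "complex^'m^'m"
  shows "trace (kron A B ** kron C D) = trace (A ** C) * trace (B ** D)"
proof -
  have pairs: "sum f UNIV = (\<Sum>i\<in>UNIV. \<Sum>k\<in>UNIV. f (i, k))" for f :: "'n \<times> 'm \<Rightarrow> complex"
    by (simp add: sum.cartesian_product)
  have "trace (kron A B ** kron C D)
      = (\<Sum>p\<in>UNIV. \<Sum>q\<in>UNIV. (A$fst p$fst q * B$snd p$snd q) * (C$fst q$fst p * D$snd q$snd p))"
    unfolding trace_matrix_mult kron_def by simp
  also have "\<dots> = (\<Sum>i\<in>UNIV. \<Sum>k\<in>UNIV. \<Sum>j\<in>UNIV. \<Sum>l\<in>UNIV. (A$i$j * B$k$l) * (C$j$i * D$l$k))"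
    by (subst pairs, subst pairs) simp
  also have "\<dots> = (\<Sum>i\<in>UNIV. \<Sum>k\<in>UNIV. \<Sum>j\<in>UNIV. \<Sum>l\<in>UNIV. (A$i$j * C$j$i) * (B$k$l * D$l$k))"
    by (simp add: mult_ac)
  also have "\<dots> = trace (A ** C) * trace (B ** D)"
    unfolding trace_matrix_mult by (simp add: sum_product)
  finally show ?thesis .
qed

lemma Re_trace_kron_mult:
  fixes A C :: "complex^'n^'n" and B D :: "complex^'m^'m"
  assumes "hermitian A" "hermitian C"
  shows "Re (trace (kron A B ** kron C D)) = Re (trace (A ** C)) * Re (trace (B ** D))"
  using Im_trace_mult_hermitian[OF assms] by (simp add: trace_kron_mult)

lemma inner_mat_of_real:
  fixes A :: "complex^'n^'n"
  shows "inner A (mat (of_real c)) = c * Re (trace A)"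
  by (simp add: inner_vec_def mat_def inner_complex_def trace_def sum_distrib_left
      if_distrib mult.commute cong: if_cong)

lemma density_matrix_purity_bounds:
  fixes A :: "complex^'n^'n"
  assumes "density_matrix A"
  shows "0 \<le> Re (trace (A ** A))" and "Re (trace (A ** A)) \<le> 1"
proof -
  have psd: "psd A" and tr: "trace A = 1"
    using assms unfolding density_matrix_def by auto
  have inner: "Re (trace (A ** A)) = inner A A"
    by (simp add: Re_trace_mult_eq_inner psd_hermitian[OF psd])
  then show "0 \<le> Re (trace (A ** A))"
    by simp
  have "inner A A = (\<Sum>i\<in>UNIV. \<Sum>j\<in>UNIV. (cmod (A$i$j))\<^sup>2)"
    by (simp only: inner_vec_def power2_norm_eq_inner)
  also have "\<dots> \<le> (\<Sum>i\<in>UNIV. \<Sum>j\<in>UNIV. Re (A$i$i) * Re (A$j$j))"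
    by (intro sum_mono psd_offdiag_le[OF psd])
  also have "\<dots> = (Re (trace A))\<^sup>2"
    by (simp add: trace_def power2_eq_square sum_product)
  finally show "Re (trace (A ** A)) \<le> 1"
    using tr inner by simp
qed

lemma density_matrix_trace_mult_sq_le:
  fixes A B :: "complex^'n^'n"
  assumes "density_matrix A" "density_matrix B"
  shows "(Re (trace (A ** B)))\<^sup>2 \<le> Re (trace (A ** A)) * Re (trace (B ** B))"
  using Cauchy_Schwarz_ineq[of A B] assms
  by (simp add: Re_trace_mult_eq_inner density_matrix_hermitian power2_eq_square)

lemma density_matrix_trace_mult_ge:
  fixes A B :: "complex^'n^'n"
  assumes A: "density_matrix A" and B: "density_matrix B"
  defines "d \<equiv> real CARD('n)"
  shows "2 - d \<le> d * Re (trace (A ** B))"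
proof -
  define c where "c = 1 / d"
  \<comment> \<open>the maximally mixed state: A - I and B - I are the traceless parts of A and B\<close>
  define I :: "complex^'n^'n" where "I = mat (of_real c)"
  have "0 < d" "c * d = 1"
    by (simp_all add: d_def c_def)
  have trace1: "Re (trace A) = 1" "Re (trace B) = 1"
    using A B by (simp_all add: density_matrix_def)
  have "Re (trace I) = d * c"
    by (simp add: I_def trace_def mat_def d_def)
  then have I: "inner A I = c" "inner B I = c" "inner I I = c"
    using trace1 \<open>c * d = 1\<close> by (simp_all add: I_def inner_mat_of_real mult.commute)
  have hermitian: "hermitian A" "hermitian B"
    using A B by (simp_all add: density_matrix_hermitian)
  have AB: "inner (A - I) (B - I) = Re (trace (A ** B)) - c"
    and AA: "inner (A - I) (A - I) = Re (trace (A ** A)) - c"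
    and BB: "inner (B - I) (B - I) = Re (trace (B ** B)) - c"
    using I by (simp_all add: Re_trace_mult_eq_inner hermitian inner_diff_left inner_diff_right inner_commute)
  have "0 \<le> Re (trace (A ** A)) - c" "0 \<le> Re (trace (B ** B)) - c"
    unfolding AA[symmetric] BB[symmetric] by simp_all
  moreover have "Re (trace (A ** A)) - c \<le> 1 - c" "Re (trace (B ** B)) - c \<le> 1 - c"
    using density_matrix_purity_bounds(2)[OF A] density_matrix_purity_bounds(2)[OF B] by simp_all
  ultimately have "(Re (trace (A ** B)) - c)\<^sup>2 \<le> (1 - c)\<^sup>2"
    using Cauchy_Schwarz_ineq[of "A - I" "B - I"] unfolding AB AA BB power2_eq_square
    by (meson mult_mono order_trans)
  then have "\<bar>Re (trace (A ** B)) - c\<bar> \<le> 1 - c"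
    using \<open>0 \<le> Re (trace (A ** A)) - c\<close> \<open>Re (trace (A ** A)) - c \<le> 1 - c\<close>
    by (simp add: abs_le_square_iff[symmetric])
  then have "d * (2 * c - 1) \<le> d * Re (trace (A ** B))"
    using \<open>0 < d\<close> by (intro mult_left_mono) auto
  then show ?thesis
    using \<open>c * d = 1\<close> by (simp add: algebra_simps)
qed

lemma sum3_mult_le_sqrt:
  fixes a1 a2 a3 b1 b2 b3 :: real
  shows "a1 * b1 + a2 * b2 + a3 * b3 \<le> sqrt (a1\<^sup>2 + a2\<^sup>2 + a3\<^sup>2) * sqrt (b1\<^sup>2 + b2\<^sup>2 + b3\<^sup>2)"
  using norm_cauchy_schwarz[of "(a1, a2, a3)" "(b1, b2, b3)"]
  by (simp add: norm_prod_def add.assoc)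

lemma super_fidelity_terms_mult_le:
  fixes a1 a2 p1 p2 q1 q2 :: real
  assumes p: "0 \<le> p1" "p1 \<le> 1" "0 \<le> p2" "p2 \<le> 1"
    and q: "0 \<le> q1" "q1 \<le> 1" "0 \<le> q2" "q2 \<le> 1"
    and a: "a1\<^sup>2 \<le> p1 * q1" "a2\<^sup>2 \<le> p2 * q2"
  shows "(a1 + sqrt (1 - p1) * sqrt (1 - q1)) * (a2 + sqrt (1 - p2) * sqrt (1 - q2))
    \<le> a1 * a2 + sqrt (1 - p1 * p2) * sqrt (1 - q1 * q2)"
proof -
  have bound: "a * s \<le> (sqrt p * sqrt q) * s" if "a\<^sup>2 \<le> p * q" "0 \<le> s" for a p q s :: real
  proof -
    have "\<bar>a\<bar> \<le> sqrt p * sqrt q"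
      using real_sqrt_le_mono[OF that(1)] by (simp add: real_sqrt_mult)
    then show ?thesis
      using that(2) abs_ge_self[of a] by (meson mult_right_mono order_trans)
  qed
  have a1: "a1 * (sqrt (1 - p2) * sqrt (1 - q2)) \<le> (sqrt p1 * sqrt (1 - p2)) * (sqrt q1 * sqrt (1 - q2))"
    using bound[OF a(1), of "sqrt (1 - p2) * sqrt (1 - q2)"] p q by (simp add: mult_ac)
  have a2: "a2 * (sqrt (1 - p1) * sqrt (1 - q1)) \<le> (sqrt (1 - p1) * sqrt p2) * (sqrt (1 - q1) * sqrt q2)"
    using bound[OF a(2), of "sqrt (1 - p1) * sqrt (1 - q1)"] p q by (simp add: mult_ac)
  have "(sqrt p1 * sqrt (1 - p2)) * (sqrt q1 * sqrt (1 - q2)) + (sqrt (1 - p1) * sqrt p2) * (sqrt (1 - q1) * sqrt q2)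
      + (sqrt (1 - p1) * sqrt (1 - p2)) * (sqrt (1 - q1) * sqrt (1 - q2))
    \<le> sqrt (p1 * (1 - p2) + (1 - p1) * p2 + (1 - p1) * (1 - p2)) * sqrt (q1 * (1 - q2) + (1 - q1) * q2 + (1 - q1) * (1 - q2))"
    using sum3_mult_le_sqrt[of "sqrt p1 * sqrt (1 - p2)" "sqrt q1 * sqrt (1 - q2)"
        "sqrt (1 - p1) * sqrt p2" "sqrt (1 - q1) * sqrt q2"
        "sqrt (1 - p1) * sqrt (1 - p2)" "sqrt (1 - q1) * sqrt (1 - q2)"] p q
    by (simp add: power_mult_distrib)
  also have "\<dots> = sqrt (1 - p1 * p2) * sqrt (1 - q1 * q2)"
    by (simp add: algebra_simps)
  finally show ?thesis
    using a1 a2 by (simp add: algebra_simps)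
qed

definition chen_affine :: "real \<Rightarrow> real \<Rightarrow> real" where
  "chen_affine d G = (let r = 1 / (d - 1) in (1 - r) / 2 + (1 + r) / 2 * G)"

lemma chen_affine_eq:
  assumes "d \<noteq> 1"
  shows "chen_affine d G = (d - 2 + d * G) / (2 * (d - 1))"
proof -
  define e where "e = d - 1"
  have "d = e + 1" "e \<noteq> 0"
    using assms by (simp_all add: e_def)
  then show ?thesis by (simp add: chen_affine_def Let_def field_simps)
qed

lemma chen_affine_mono:
  assumes "1 < d" "G \<le> G'"
  shows "chen_affine d G \<le> chen_affine d G'"
  using assms by (simp add: chen_affine_eq divide_right_mono)

lemma chen_affine_mult_le:
  fixes d1 d2 G1 G2 :: real
  assumes d: "1 < d1" "1 < d2"
    and G: "2 - d1 \<le> d1 * G1" "G1 \<le> 1" "2 - d2 \<le> d2 * G2" "G2 \<le> 1"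
  shows "chen_affine d1 G1 * chen_affine d2 G2 \<le> chen_affine (d1 * d2) (G1 * G2)"
proof -
  define s t where "s = chen_affine d1 G1" and "t = chen_affine d2 G2"
  have s: "0 \<le> s" "s \<le> 1" and t: "0 \<le> t" "t \<le> 1"
    using d G by (auto simp: s_def t_def chen_affine_eq field_simps)
  have G1: "d1 * G1 = 2 * (d1 - 1) * s + 2 - d1" and G2: "d2 * G2 = 2 * (d2 - 1) * t + 2 - d2"
    using d by (auto simp: s_def t_def chen_affine_eq field_simps)
  define D where "D = d1 * d2 - 1"
  have D: "0 < D" "d1 * d2 = D + 1"
    using d by (simp_all add: D_def less_1_mult)
  define N where "N = (d1 - 1) * (d2 - 1) * (1 - s) * (1 - t) + (d1 - 1) * s * (1 - t) + (d2 - 1) * t * (1 - s)"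
  have "0 \<le> N"
    unfolding N_def using d s t by (intro add_nonneg_nonneg mult_nonneg_nonneg) auto
  have "D - 1 + (d1 * G1) * (d2 * G2) = 2 * D * (s * t) + 2 * N"
    unfolding G1 G2 N_def D_def by (simp add: algebra_simps)
  then have "chen_affine (d1 * d2) (G1 * G2) = s * t + N / D"
    using D by (simp add: chen_affine_eq field_simps)
  then show ?thesis
    using \<open>0 \<le> N\<close> D by (simp add: s_def t_def)
qed

definition super_fidelity :: "complex^'n^'n \<Rightarrow> complex^'n^'n \<Rightarrow> real" where
  "super_fidelity \<rho> \<sigma> =
     Re (trace (\<rho> ** \<sigma>)) + sqrt (1 - Re (trace (\<rho> ** \<rho>))) * sqrt (1 - Re (trace (\<sigma> ** \<sigma>)))"

lemma fidelity_C_eq_chen_affine: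
  "fidelity_C \<rho> \<sigma> = chen_affine (real CARD('n)) (super_fidelity \<rho> \<sigma>)"
  for \<rho> \<sigma> :: "complex^'n^'n"
  unfolding fidelity_C_def chen_affine_def super_fidelity_def ..

lemma super_fidelity_le_1:
  fixes A B :: "complex^'n^'n"
  assumes A: "density_matrix A" and B: "density_matrix B"
  shows "super_fidelity A B \<le> 1"
proof -
  define p q where "p = Re (trace (A ** A))" and "q = Re (trace (B ** B))"
  have pq: "0 \<le> p" "p \<le> 1" "0 \<le> q" "q \<le> 1"
    using density_matrix_purity_bounds[OF A] density_matrix_purity_bounds[OF B] by (simp_all add: p_def q_def)
  have "Re (trace (A ** B)) \<le> sqrt p * sqrt q"
    using density_matrix_trace_mult_sq_le[OF A B] unfolding p_def q_def
    by (metis real_sqrt_le_mono real_sqrt_abs real_sqrt_mult abs_ge_self order_trans)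
  moreover have "sqrt p * sqrt q + sqrt (1 - p) * sqrt (1 - q) \<le> 1"
    using sum3_mult_le_sqrt[of "sqrt p" "sqrt q" "sqrt (1 - p)" "sqrt (1 - q)" 0 0] pq by simp
  ultimately show ?thesis
    by (simp add: super_fidelity_def p_def q_def)
qed

lemma super_fidelity_ge:
  fixes A B :: "complex^'n^'n"
  assumes "density_matrix A" "density_matrix B"
  shows "2 - real CARD('n) \<le> real CARD('n) * super_fidelity A B"
proof -
  have "real CARD('n) * Re (trace (A ** B)) \<le> real CARD('n) * super_fidelity A B"
    using density_matrix_purity_bounds(2)[OF assms(1)] density_matrix_purity_bounds(2)[OF assms(2)]
    by (simp add: super_fidelity_def)
  with density_matrix_trace_mult_ge[OF assms] show ?thesis
    by linarith
qed

lemma super_fidelity_kron_ge: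
  fixes \<rho>1 \<sigma>1 :: "complex^'n^'n" and \<rho>2 \<sigma>2 :: "complex^'m^'m"
  assumes "density_matrix \<rho>1" "density_matrix \<sigma>1" "density_matrix \<rho>2" "density_matrix \<sigma>2"
  shows "super_fidelity \<rho>1 \<sigma>1 * super_fidelity \<rho>2 \<sigma>2 \<le> super_fidelity (kron \<rho>1 \<rho>2) (kron \<sigma>1 \<sigma>2)"
  using super_fidelity_terms_mult_le[OF density_matrix_purity_bounds[OF assms(1)]
      density_matrix_purity_bounds[OF assms(3)] density_matrix_purity_bounds[OF assms(2)]
      density_matrix_purity_bounds[OF assms(4)] density_matrix_trace_mult_sq_le[OF assms(1,2)]
      density_matrix_trace_mult_sq_le[OF assms(3,4)]]
  by (simp add: super_fidelity_def Re_trace_kron_mult density_matrix_hermitian assms)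

theorem theorem5:
  fixes \<rho>1 \<sigma>1 :: "complex^'n::finite^'n" and \<rho>2 \<sigma>2 :: "complex^'m::finite^'m"
  assumes "CARD('n) \<ge> 2" and "CARD('m) \<ge> 2"
    and "density_matrix \<rho>1" and "density_matrix \<sigma>1"
    and "density_matrix \<rho>2" and "density_matrix \<sigma>2"
  shows "fidelity_C (kron \<rho>1 \<rho>2) (kron \<sigma>1 \<sigma>2) \<ge> fidelity_C \<rho>1 \<sigma>1 * fidelity_C \<rho>2 \<sigma>2"
proof -
  let ?d1 = "real CARD('n)" and ?d2 = "real CARD('m)"
  have d: "1 < ?d1" "1 < ?d2" "1 < ?d1 * ?d2"
    using assms(1,2) by (simp_all add: less_1_mult)
  have "fidelity_C \<rho>1 \<sigma>1 * fidelity_C \<rho>2 \<sigma>2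
      = chen_affine ?d1 (super_fidelity \<rho>1 \<sigma>1) * chen_affine ?d2 (super_fidelity \<rho>2 \<sigma>2)"
    by (simp add: fidelity_C_eq_chen_affine)
  also have "\<dots> \<le> chen_affine (?d1 * ?d2) (super_fidelity \<rho>1 \<sigma>1 * super_fidelity \<rho>2 \<sigma>2)"
    using assms(3-6) by (intro chen_affine_mult_le d super_fidelity_ge super_fidelity_le_1)
  also have "\<dots> \<le> chen_affine (?d1 * ?d2) (super_fidelity (kron \<rho>1 \<rho>2) (kron \<sigma>1 \<sigma>2))"
    using assms(3-6) by (intro chen_affine_mono d super_fidelity_kron_ge)
  also have "\<dots> = fidelity_C (kron \<rho>1 \<rho>2) (kron \<sigma>1 \<sigma>2)"
    by (simp add: fidelity_C_eq_chen_affine)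
  finally show ?thesis .
qed

end
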